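(* Let $\{C_\lambda\}$ be a combined rating rule satisfying (A1), (A2) and (A3). Then for every $n\ge1$, every $\lambda\in(0,\infty)^n$, every $R\in\mathbb{R}^n$ and every $\alpha>0$, $C_{\alpha\lambda}(R)=C_\lambda(R)$.
   Context: A combined rating rule assigns to every $n\ge1$ and every positive weight vector $\lambda=(\lambda_1,\dots,\lambda_n)\in(0,\infty)^n$ a function $C_\lambda:\mathbb{R}^n\to\mathbb{R}$. Write $\bar\lambda_B=\sum_{i\in B}\lambda_i$, $R_B=(R_i)_{i\in B}$, $\lambda_B=(\lambda_i)_{i\in B}$ for nonempty $B\subseteq\{1,\dots,n\}$ (inherited increasing order); $\mathbf 1$ is the all-ones vector. (A1) Same-scale normalization: $C_\lambda(r\mathbf 1)=r$ for all $\lambda$ and all $r\in\mathbb{R}$. (A2) Regularity and monotonicity: for each $n$, $(\lambda,R)\mapsto C_\lambda(R)$ is continuous on $(0,\infty)^n\times\mathbb{R}^n$; for each fixed $\lambda$, $C_\lambda$ is continuously differentiable with $\partial_i C_\lambda(R)>0$ for all $i$ and all $R$. (A3) Recursive consistency: for every ordered partition $(B_1,\dots,B_m)$ of $\{1,\dots,n\}$ into nonempty blocks, $C_\lambda(R)=C_{(\bar\lambda_{B_1},\dots,\bar\lambda_{B_m})}\big(C_{\lambda_{B_1}}(R_{B_1}),\dots,C_{\lambda_{B_m}}(R_{B_m})\big)$. *)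

theory Defs
  imports "HOL-Analysis.Analysis"
begin

text \<open>A combined rating rule is modelled as C :: real list \<Rightarrow> real list \<Rightarrow> real,
  where C lam R is the value of C_lam at R; it is only meaningful when
  lam is a nonempty list of positive weights and length R = length lam.
  Coordinates are indexed 0..n-1.\<close>

definition pos_weights :: "real list \<Rightarrow> bool" where
  "pos_weights lam \<longleftrightarrow> lam \<noteq> [] \<and> (\<forall>x\<in>set lam. x > 0)"

definition same_scale :: "(real list \<Rightarrow> real list \<Rightarrow> real) \<Rightarrow> bool" where
  "same_scale C \<longleftrightarrow> (\<forall>lam r. pos_weights lam \<longrightarrow> C lam (replicate (length lam) r) = r)"

text \<open>A point of
  R^n is represented by the first n coordinates of a function nat \<Rightarrow> real (product
  topology); a function depending only on the first n coordinates is continuous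
  for the product topology iff it is continuous on R^n.\<close>
definition joint_continuous :: "(real list \<Rightarrow> real list \<Rightarrow> real) \<Rightarrow> bool" where
  "joint_continuous C \<longleftrightarrow> (\<forall>n\<ge>1.
     continuous_on ({l :: nat \<Rightarrow> real. \<forall>i<n. l i > 0} \<times> UNIV)
       (\<lambda>(l, x :: nat \<Rightarrow> real). C (map l [0..<n]) (map x [0..<n])))"

text \<open>(A2) for fixed lam, C_lam is continuously differentiable with positive partial
  derivatives: each partial derivative exists everywhere, is positive, and is
  continuous in R (existence and continuity of all partials is C^1).\<close>
definition C1_pos_partials :: "(real list \<Rightarrow> real list \<Rightarrow> real) \<Rightarrow> bool" where
  "C1_pos_partials C \<longleftrightarrow> (\<forall>lam. pos_weights lam \<longrightarrow>
     (\<exists>D :: nat \<Rightarrow> real list \<Rightarrow> real. \<forall>i < length lam.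
        (\<forall>R. length R = length lam \<longrightarrow>
           ((\<lambda>t. C lam (R[i := t])) has_real_derivative D i R) (at (R ! i)) \<and> D i R > 0) \<and>
        continuous_on UNIV (\<lambda>x :: nat \<Rightarrow> real. D i (map x [0..<length lam]))))"

definition ordered_partition :: "nat set list \<Rightarrow> nat \<Rightarrow> bool" where
  "ordered_partition Bs n \<longleftrightarrow>
     (\<forall>B\<in>set Bs. B \<noteq> {}) \<and> \<Union>(set Bs) = {0..<n} \<and>
     (\<forall>j<length Bs. \<forall>k<length Bs. j \<noteq> k \<longrightarrow> Bs ! j \<inter> Bs ! k = {})"

definition recursive_consistency :: "(real list \<Rightarrow> real list \<Rightarrow> real) \<Rightarrow> bool" where
  "recursive_consistency C \<longleftrightarrow> (\<forall>lam R Bs.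
     pos_weights lam \<longrightarrow> length R = length lam \<longrightarrow> ordered_partition Bs (length lam) \<longrightarrow>
     C lam R = C (map (\<lambda>B. sum_list (nths lam B)) Bs)
                  (map (\<lambda>B. C (nths lam B) (nths R B)) Bs))"

end

theory Submission
  imports Defs
begin

text \<open>Take k copies of (lam, R). Grouping the copies and applying same-scale normalization
  to the resulting block ratings gives C_lam(R); grouping instead the k equal entries of each
  coordinate gives C_{k lam}(R). Hence C_{k lam} = C_lam for positive integers k; applied to
  lam/n this yields invariance under positive rational factors, and continuity in lam extends
  it to all alpha > 0.\<close>

lemma nths_Int_lessThan_length: "nths xs (A \<inter> {..<length xs}) = nths xs A"
  unfolding nths_def
  by (rule arg_cong[where f="map fst"], rule filter_cong) (auto simp: set_zip)

lemma nths_append_prefix: "nths (xs @ ys) {0..<length xs} = xs"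
  by (simp add: nths_append nths_all)

lemma nths_append_suffix: "nths (xs @ ys) {length xs..<length xs + length ys} = ys"
proof -
  have "{length xs..<length xs + length ys} \<inter> {..<length xs} = {}" by auto
  then have "nths xs {length xs..<length xs + length ys} = []"
    by (metis nths_Int_lessThan_length nths_empty)
  then show ?thesis by (simp add: nths_append nths_all)
qed

lemma nths_singleton_index: "i < length xs \<Longrightarrow> nths xs {i} = [xs ! i]"
proof (induction xs arbitrary: i)
  case (Cons x xs)
  then show ?case by (cases i) (auto simp: nths_Cons)
qed simp

lemma nths_concat_replicate_mod:
  assumes "i < length xs"
  shows "nths (concat (replicate k xs)) {m. m mod length xs = i} = replicate k (xs ! i)"
proof (induction k)
  case (Suc k)
  have "{m. m mod length xs = i} \<inter> {..<length xs} = {i}" using assms by auto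
  then have "nths xs {m. m mod length xs = i} = nths xs {i}"
    by (metis nths_Int_lessThan_length)
  then show ?case using Suc assms by (simp add: nths_append nths_singleton_index)
qed simp

lemma pos_weights_sum_list_pos: "pos_weights lam \<Longrightarrow> sum_list lam > 0"
proof (induction lam)
  case (Cons x lam)
  then show ?case by (cases "lam = []") (auto simp: pos_weights_def)
qed (simp add: pos_weights_def)

lemma pos_weights_append: "pos_weights lam \<Longrightarrow> pos_weights mu \<Longrightarrow> pos_weights (lam @ mu)"
  by (auto simp: pos_weights_def)

lemma pos_weights_concat_replicate:
  "pos_weights lam \<Longrightarrow> k > 0 \<Longrightarrow> pos_weights (concat (replicate k lam))"
  by (cases k) (auto simp: pos_weights_def)

lemma pos_weights_replicate: "x > 0 \<Longrightarrow> k > 0 \<Longrightarrow> pos_weights (replicate k x)"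
  by (simp add: pos_weights_def)

lemma ordered_partition_two_intervals:
  "n > 0 \<Longrightarrow> m > 0 \<Longrightarrow> ordered_partition [{0..<n}, {n..<n + m}] (n + m)"
  by (auto simp: ordered_partition_def less_Suc_eq nth_Cons')

lemma ordered_partition_residues:
  assumes "n > 0" "k > 0"
  shows "ordered_partition (map (\<lambda>i. {m. m < k * n \<and> m mod n = i}) [0..<n]) (k * n)"
  unfolding ordered_partition_def
proof (intro conjI ballI allI impI)
  fix B assume "B \<in> set (map (\<lambda>i. {m. m < k * n \<and> m mod n = i}) [0..<n])"
  then obtain i where i: "i < n" "B = {m. m < k * n \<and> m mod n = i}" by auto
  have "i < k * n" using i(1) assms(2) by (cases k) auto
  then have "i \<in> B" using i by simp
  then show "B \<noteq> {}" by blast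
next
  show "\<Union> (set (map (\<lambda>i. {m. m < k * n \<and> m mod n = i}) [0..<n])) = {0..<k * n}"
    using assms(1) by auto
qed auto

lemma same_scaleD:
  assumes "same_scale C" "pos_weights lam" "length R = length lam" "\<forall>x\<in>set R. x = r"
  shows "C lam R = r"
  using assms replicate_length_same[of R r] unfolding same_scale_def by metis

lemma rating_append:
  assumes A3: "recursive_consistency C"
    and lam: "pos_weights lam" and mu: "pos_weights mu"
    and R: "length R = length lam" and S: "length S = length mu"
  shows "C (lam @ mu) (R @ S) = C [sum_list lam, sum_list mu] [C lam R, C mu S]"
proof -
  have "ordered_partition [{0..<length lam}, {length lam..<length lam + length mu}]
          (length (lam @ mu))"
    using lam mu by (simp add: ordered_partition_two_intervals pos_weights_def)
  then show ?thesis
    using A3[unfolded recursive_consistency_def, rule_format, OF pos_weights_append[OF lam mu]]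
      R S nths_append_prefix[of R S] nths_append_suffix[of R S]
    by (simp add: nths_append_prefix nths_append_suffix)
qed

lemma rating_concat_replicate:
  assumes A1: "same_scale C" and A3: "recursive_consistency C"
    and lam: "pos_weights lam" and R: "length R = length lam" and k: "k > 0"
  shows "C (concat (replicate k lam)) (concat (replicate k R)) = C lam R"
  using k
proof (induction k rule: nat_induct_non_zero)
  case (Suc k)
  let ?L = "concat (replicate k lam)" and ?S = "concat (replicate k R)"
  have L: "pos_weights ?L" using pos_weights_concat_replicate[OF lam Suc(1)] .
  have "length ?S = length ?L" using R by (simp add: length_concat sum_list_replicate)
  then have "C (lam @ ?L) (R @ ?S) = C [sum_list lam, sum_list ?L] [C lam R, C lam R]"
    using rating_append[OF A3 lam L R] Suc(2) by simp
  also have "\<dots> = C lam R"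
    using pos_weights_sum_list_pos[OF lam] pos_weights_sum_list_pos[OF L]
    by (intro same_scaleD[OF A1]) (auto simp: pos_weights_def)
  finally show ?case by simp
qed simp

lemma rating_concat_replicate_eq_scale:
  assumes A1: "same_scale C" and A3: "recursive_consistency C"
    and lam: "pos_weights lam" and R: "length R = length lam" and k: "k > 0"
  shows "C (concat (replicate k lam)) (concat (replicate k R)) = C (map (\<lambda>x. real k * x) lam) R"
proof -
  let ?n = "length lam" and ?L = "concat (replicate k lam)" and ?S = "concat (replicate k R)"
  define column where "column = (\<lambda>i. {m. m < k * ?n \<and> m mod ?n = i})"
  have n: "?n > 0" using lam by (simp add: pos_weights_def)
  have L: "length ?L = k * ?n" and S: "length ?S = k * ?n"
    using R by (simp_all add: length_concat sum_list_replicate)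
  have nths_column: "nths (concat (replicate k xs)) (column i) = replicate k (xs ! i)"
    if "length xs = ?n" "i < ?n" for xs :: "real list" and i
  proof -
    have "{m. m mod ?n = i} \<inter> {..<length (concat (replicate k xs))} = column i"
      using that by (auto simp: column_def length_concat sum_list_replicate)
    then show ?thesis
      using nths_concat_replicate_mod[of i xs k] nths_Int_lessThan_length that by metis
  qed
  have "ordered_partition (map column [0..<?n]) (length ?L)"
    using ordered_partition_residues[OF n k] by (simp add: column_def L)
  then have "C ?L ?S = C (map (\<lambda>i. sum_list (nths ?L (column i))) [0..<?n])
      (map (\<lambda>i. C (nths ?L (column i)) (nths ?S (column i))) [0..<?n])"
    using A3 pos_weights_concat_replicate[OF lam k] L S
    unfolding recursive_consistency_def by (simp add: o_def)
  also have "map (\<lambda>i. sum_list (nths ?L (column i))) [0..<?n] = map (\<lambda>x. real k * x) lam"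
    by (rule nth_equalityI) (simp_all add: nths_column sum_list_replicate)
  also have "map (\<lambda>i. C (nths ?L (column i)) (nths ?S (column i))) [0..<?n] = R"
  proof (rule nth_equalityI)
    fix i assume "i < length (map (\<lambda>i. C (nths ?L (column i)) (nths ?S (column i))) [0..<?n])"
    then have i: "i < ?n" by simp
    have "lam ! i > 0" using lam i by (simp add: pos_weights_def)
    then show "map (\<lambda>i. C (nths ?L (column i)) (nths ?S (column i))) [0..<?n] ! i = R ! i"
      using i k R by (simp add: nths_column same_scaleD[OF A1] pos_weights_replicate)
  qed (simp add: R)
  finally show ?thesis .
qed

lemma rating_scale_nat:
  assumes A1: "same_scale C" and A3: "recursive_consistency C"
    and lam: "pos_weights lam" and R: "length R = length lam" and k: "k > 0"
  shows "C (map (\<lambda>x. real k * x) lam) R = C lam R"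
  using rating_concat_replicate_eq_scale[OF assms] rating_concat_replicate[OF assms] by simp

lemma rating_scale_rat:
  assumes A1: "same_scale C" and A3: "recursive_consistency C"
    and lam: "pos_weights lam" and R: "length R = length lam" and q: "q \<in> \<rat>" "q > 0"
  shows "C (map (\<lambda>x. q * x) lam) R = C lam R"
proof -
  obtain m n :: nat where n: "n > 0" and q_eq: "q = real m / real n"
    using Rats_abs_nat_div_natE[OF q(1)] q(2) by (metis abs_of_pos gr0I)
  have m: "m > 0" using q(2) q_eq by (cases m) auto
  define mu where "mu = map (\<lambda>x. x / real n) lam"
  have mu: "pos_weights mu" and R_mu: "length R = length mu"
    using lam n R by (auto simp: pos_weights_def mu_def)
  have "C (map (\<lambda>x. q * x) lam) R = C (map (\<lambda>x. real m * x) mu) R"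
    by (simp add: mu_def q_eq o_def)
  also have "\<dots> = C (map (\<lambda>x. real n * x) mu) R"
    using rating_scale_nat[OF A1 A3 mu R_mu m] rating_scale_nat[OF A1 A3 mu R_mu n] by simp
  also have "map (\<lambda>x. real n * x) mu = lam"
    using n by (simp add: mu_def map_idI)
  finally show ?thesis .
qed

lemma continuous_on_const_on_Rats:
  fixes f :: "real \<Rightarrow> 'a::t1_space"
  assumes "open S" "continuous_on S f" "\<And>q. q \<in> S \<inter> \<rat> \<Longrightarrow> f q = a" "x \<in> S"
  shows "f x = a"
proof -
  obtain T where T: "closed T" "{y \<in> S. f y = a} = S \<inter> T"
    using continuous_closedin_preimage_constant[OF assms(2)] closedin_closed by metis
  have "S \<inter> \<rat> \<subseteq> T" using T(2) assms(3) by blast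
  then have "closure (S \<inter> \<rat>) \<subseteq> T" using T(1) by (rule closure_minimal)
  moreover have "S \<subseteq> closure (S \<inter> \<rat>)"
    using open_Int_closure_subset[OF assms(1), of \<rat>] by (simp add: Rats_closure_real)
  ultimately show ?thesis using T(2) assms(4) by blast
qed

lemma continuous_on_rating_scale:
  assumes A2: "joint_continuous C" and lam: "pos_weights lam" and R: "length R = length lam"
  shows "continuous_on {0<..} (\<lambda>a. C (map (\<lambda>x. a * x) lam) R)"
proof -
  let ?n = "length lam"
  let ?S = "{l :: nat \<Rightarrow> real. \<forall>i<?n. l i > 0} \<times> (UNIV :: (nat \<Rightarrow> real) set)"
  let ?g = "\<lambda>(l, x :: nat \<Rightarrow> real). C (map l [0..<?n]) (map x [0..<?n])"
  let ?h = "\<lambda>a::real. (\<lambda>i. a * lam ! i, \<lambda>i. R ! i)"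
  have "continuous_on ?S ?g"
    using A2 lam unfolding joint_continuous_def pos_weights_def by (simp add: Suc_leI)
  moreover have "continuous_on {0<..} ?h"
    by (intro continuous_intros continuous_on_coordinatewise_then_product)
  moreover have "?h ` {0<..} \<subseteq> ?S"
    using lam by (auto simp: pos_weights_def)
  ultimately have "continuous_on {0<..} (\<lambda>a. ?g (?h a))"
    by (rule continuous_on_compose2)
  moreover have "map (\<lambda>i. a * lam ! i) [0..<?n] = map (\<lambda>x. a * x) lam" for a
    by (rule nth_equalityI) simp_all
  moreover have "map (\<lambda>i. R ! i) [0..<?n] = R"
    using R map_nth[of R] by simp
  ultimately show ?thesis by simp
qed

theorem lemma2:
  fixes C :: "real list \<Rightarrow> real list \<Rightarrow> real"
  assumes A1: "same_scale C"
    and A2_cont: "joint_continuous C"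
    and A2_diff: "C1_pos_partials C"
    and A3: "recursive_consistency C"
    and lam: "pos_weights lam"
    and R: "length R = length lam"
    and alpha: "(\<alpha>::real) > 0"
  shows "C (map (\<lambda>x. \<alpha> * x) lam) R = C lam R"
proof -
  have cont: "continuous_on {0<..} (\<lambda>a. C (map (\<lambda>x. a * x) lam) R)"
    by (rule continuous_on_rating_scale[OF A2_cont lam R])
  have rat: "C (map (\<lambda>x. q * x) lam) R = C lam R" if "q \<in> {0<..} \<inter> \<rat>" for q
    using rating_scale_rat[OF A1 A3 lam R] that by simp
  show ?thesis
    using continuous_on_const_on_Rats[OF open_greaterThan cont rat] alpha by simp
qed

end
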